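(* Let $\mathbb{G}$ be a partially commutative group, $x$ one of its canonical generators, $n\ge 2$, and let $\mathbb{H}=\langle \mathbb{G}, A\mid [A,C_{\mathbb{G}}(x)]=1\rangle$, where $A\cong\mathbb{Z}^{n-1}$ is free abelian (i.e. $\mathbb{H}$ is obtained from $\mathbb{G}$ by adjoining a free abelian group $A$ of rank $n-1$ whose elements commute with every element of the centraliser $C_{\mathbb{G}}(x)$). Then $\mathbb{H}$ is discriminated by $\mathbb{G}$.
   Context: A partially commutative group is $\mathbb{G}(\Gamma)=\langle V(\Gamma)\mid [x,y]=1 \text{ for } (x,y)\in E(\Gamma)\rangle$ for a finite simplicial graph $\Gamma$; its canonical generators are the elements of $V(\Gamma)$. A group $H$ is discriminated by $G$ if for every finite set $S\subseteq H$ there is a homomorphism $H\to G$ that is injective on $S$. *)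

theory Defs
  imports "HOL-Algebra.Group"
begin

text \<open>Group presentations. A letter is a pair (g, b) where b = True means the
inverse of the generator g. Words over a generator set X are lists of letters
from X.\<close>

type_synonym 'g word = "('g \<times> bool) list"

definition words :: "'g set \<Rightarrow> 'g word set" where
  "words X = {w. \<forall>l \<in> set w. fst l \<in> X}"

definition word_inv :: "'g word \<Rightarrow> 'g word" where
  "word_inv w = rev (map (\<lambda>(g, b). (g, \<not> b)) w)"

definition commutator_word :: "'g word \<Rightarrow> 'g word \<Rightarrow> 'g word" where
  "commutator_word u v = u @ v @ word_inv u @ word_inv v"

inductive_set pres_rel :: "'g set \<Rightarrow> 'g word set \<Rightarrow> ('g word \<times> 'g word) set"
  for X :: "'g set" and R :: "'g word set" where
  refl: "w \<in> words X \<Longrightarrow> (w, w) \<in> pres_rel X R"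
| sym: "(u, v) \<in> pres_rel X R \<Longrightarrow> (v, u) \<in> pres_rel X R"
| trans: "(u, v) \<in> pres_rel X R \<Longrightarrow> (v, w) \<in> pres_rel X R \<Longrightarrow> (u, w) \<in> pres_rel X R"
| cancel: "u \<in> words X \<Longrightarrow> v \<in> words X \<Longrightarrow> a \<in> X \<Longrightarrow>
     (u @ [(a, b), (a, \<not> b)] @ v, u @ v) \<in> pres_rel X R"
| relator: "u \<in> words X \<Longrightarrow> v \<in> words X \<Longrightarrow> r \<in> R \<Longrightarrow> r \<in> words X \<Longrightarrow>
     (u @ r @ v, u @ v) \<in> pres_rel X R"

definition presented_group :: "'g set \<Rightarrow> 'g word set \<Rightarrow> ('g word set) monoid" where
  "presented_group X R =
    \<lparr> carrier = words X // pres_rel X R,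
      monoid.mult = (\<lambda>A B. pres_rel X R `` {(SOME a. a \<in> A) @ (SOME b. b \<in> B)}),
      one = pres_rel X R `` {[]} \<rparr>"

definition pc_relators :: "'v set \<Rightarrow> ('v \<times> 'v) set \<Rightarrow> 'v word set" where
  "pc_relators V E = {commutator_word [(x, False)] [(y, False)] | x y. (x, y) \<in> E}"

definition pc_group :: "'v set \<Rightarrow> ('v \<times> 'v) set \<Rightarrow> ('v word set) monoid" where
  "pc_group V E = presented_group V (pc_relators V E)"

definition simplicial_graph :: "'v set \<Rightarrow> ('v \<times> 'v) set \<Rightarrow> bool" where
  "simplicial_graph V E \<longleftrightarrow> finite V \<and> E \<subseteq> V \<times> V \<and> sym E \<and> irrefl E"

definition centralizer :: "('a, 'b) monoid_scheme \<Rightarrow> 'a \<Rightarrow> 'a set" where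
  "centralizer G g = {c \<in> carrier G. c \<otimes>\<^bsub>G\<^esub> g = g \<otimes>\<^bsub>G\<^esub> c}"

text \<open>The group H = < G, A | [A, C_G(x)] = 1 > with A free abelian of rank m,
with basis the generators Inr i, i < m. Generators of G are Inl v.\<close>

definition ext_gens :: "'v set \<Rightarrow> nat \<Rightarrow> ('v + nat) set" where
  "ext_gens V m = Inl ` V \<union> Inr ` {..<m}"

definition lift_word :: "'v word \<Rightarrow> ('v + nat) word" where
  "lift_word w = map (\<lambda>(g, b). (Inl g, b)) w"

definition ext_relators :: "'v set \<Rightarrow> ('v \<times> 'v) set \<Rightarrow> 'v \<Rightarrow> nat \<Rightarrow> ('v + nat) word set" where
  "ext_relators V E x m =
     lift_word ` pc_relators V E
     \<union> {commutator_word [(Inr i, False)] [(Inr j, False)] | i j. i < m \<and> j < m}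
     \<union> {commutator_word [(Inr i, False)] (lift_word c) | i c.
          i < m \<and> c \<in> words V \<and>
          pres_rel V (pc_relators V E) `` {c} \<in> centralizer (pc_group V E) (pres_rel V (pc_relators V E) `` {[(x, False)]})}"

definition ext_group :: "'v set \<Rightarrow> ('v \<times> 'v) set \<Rightarrow> 'v \<Rightarrow> nat \<Rightarrow> (('v + nat) word set) monoid" where
  "ext_group V E x m = presented_group (ext_gens V m) (ext_relators V E x m)"

definition discriminated_by :: "('a, 'c) monoid_scheme \<Rightarrow> ('b, 'd) monoid_scheme \<Rightarrow> bool" where
  "discriminated_by H G \<longleftrightarrow>
     (\<forall>S. S \<subseteq> carrier H \<and> finite S \<longrightarrow> (\<exists>h \<in> hom H G. inj_on h S))"

end

theory Submission
  imports Defs "HOL-Computational_Algebra.Polynomial"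
begin

text \<open>For every N, fixing G and sending the i-th basis element of A to x ^ (N ^ (i + 1))
  defines a homomorphism H \<rightarrow> G, because these powers of x commute with each other and
  with C(x). It suffices that a nontrivial element of H survives for all but finitely many N.
  Such an element is represented by a word that is reduced for the partial commutation of H
  (in which the letters of A behave like x) and in which letters at x are gathered into
  maximal blocks. A block is sent to x ^ p(N), where p is an integer polynomial whose
  coefficient of degree i + 1 is the exponent sum of the i-th basis element in the block;
  reducedness makes p nonzero. Outside the finitely many roots of these polynomials the image
  of the word reduces, block by block, to a nonempty reduced word of G, and nonempty reduced
  words are nontrivial: G acts on families of projections to pairs of non-adjacent vertices,
  and a reduced word moves the trivial family.\<close>

section \<open>Presented groups\<close>

lemma words_Nil [simp]: "[] \<in> words X"
  by (simp add: words_def)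

lemma words_Cons [simp]: "l # u \<in> words X \<longleftrightarrow> fst l \<in> X \<and> u \<in> words X"
  by (auto simp: words_def)

lemma words_append [simp]: "u @ v \<in> words X \<longleftrightarrow> u \<in> words X \<and> v \<in> words X"
  by (auto simp: words_def)

lemma pres_rel_words: "(u, v) \<in> pres_rel X R \<Longrightarrow> u \<in> words X \<and> v \<in> words X"
  by (induction rule: pres_rel.induct) auto

lemma pres_rel_append_context:
  assumes "(u, v) \<in> pres_rel X R" "p \<in> words X" "q \<in> words X"
  shows "(p @ u @ q, p @ v @ q) \<in> pres_rel X R"
  using assms
proof (induction rule: pres_rel.induct)
  case (refl w)
  then show ?case by (intro pres_rel.refl) simp
next
  case (sym u v)
  then show ?case by (blast intro: pres_rel.sym)
next
  case (trans u v w)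
  then show ?case by (blast intro: pres_rel.trans)
next
  case (cancel u v a b)
  then show ?case using pres_rel.cancel[of "p @ u" X "v @ q" a b R] by simp
next
  case (relator u v r)
  then show ?case using pres_rel.relator[of "p @ u" X "v @ q" r R] by simp
qed

lemma equiv_pres_rel: "equiv (words X) (pres_rel X R)"
proof (rule equivI)
  show "refl_on (words X) (pres_rel X R)"
    unfolding refl_on_def using pres_rel_words by (blast intro: pres_rel.intros)
  show "sym (pres_rel X R)" unfolding sym_def by (blast intro: pres_rel.intros)
  show "trans (pres_rel X R)" unfolding trans_def by (blast intro: pres_rel.intros)
  show "pres_rel X R \<subseteq> words X \<times> words X" using pres_rel_words by auto
qed

lemma pres_rel_cancel_letter:
  "p \<in> words X \<Longrightarrow> q \<in> words X \<Longrightarrow> a \<in> X \<Longrightarrow> (p @ (a, b) # (a, \<not> b) # q, p @ q) \<in> pres_rel X R"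
  using pres_rel.cancel[of p X q a b R] by simp

definition letter_inv :: "'g \<times> bool \<Rightarrow> 'g \<times> bool" where
  "letter_inv l = (fst l, \<not> snd l)"

lemma fst_letter_inv [simp]: "fst (letter_inv l) = fst l"
  by (simp add: letter_inv_def)

lemma word_inv_Nil [simp]: "word_inv [] = []"
  by (simp add: word_inv_def)

lemma word_inv_Cons [simp]: "word_inv (l # w) = word_inv w @ [letter_inv l]"
  by (cases l) (simp add: word_inv_def letter_inv_def)

lemma word_inv_append [simp]: "word_inv (u @ w) = word_inv w @ word_inv u"
  by (simp add: word_inv_def)

lemma word_inv_word_inv [simp]: "word_inv (word_inv w) = w"
  by (induction w) (auto simp: letter_inv_def)

lemma word_inv_words [simp]: "word_inv w \<in> words X \<longleftrightarrow> w \<in> words X"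
  by (induction w) (auto simp: letter_inv_def)

lemma word_inv_replicate: "word_inv (replicate k (g, b)) = replicate k (g, \<not> b)"
  by (simp add: word_inv_def)

lemma pres_rel_cancel_word:
  "w \<in> words X \<Longrightarrow> p \<in> words X \<Longrightarrow> q \<in> words X \<Longrightarrow>
    (p @ w @ word_inv w @ q, p @ q) \<in> pres_rel X R"
proof (induction w arbitrary: p q)
  case Nil
  then show ?case by (simp add: pres_rel.refl)
next
  case (Cons l w)
  have "(p @ l # (w @ word_inv w) @ letter_inv l # q, p @ l # letter_inv l # q) \<in> pres_rel X R"
    using pres_rel_append_context[OF Cons.IH[of "[]" "[]"], of "p @ [l]" "letter_inv l # q"] Cons.prems
    by (simp add: letter_inv_def)
  moreover have "(p @ l # letter_inv l # q, p @ q) \<in> pres_rel X R"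
    using pres_rel_cancel_letter[of p X q "fst l" "snd l" R] Cons.prems
    by (cases l) (simp add: letter_inv_def)
  ultimately show ?case by (simp add: pres_rel.trans)
qed

lemma pres_rel_iff_quotient_trivial:
  assumes "a \<in> words X" "b \<in> words X"
  shows "(a, b) \<in> pres_rel X R \<longleftrightarrow> (a @ word_inv b, []) \<in> pres_rel X R"
proof
  assume "(a, b) \<in> pres_rel X R"
  then have "([] @ a @ word_inv b, [] @ b @ word_inv b) \<in> pres_rel X R"
    using assms by (intro pres_rel_append_context) auto
  moreover have "(b @ word_inv b @ [], []) \<in> pres_rel X R"
    using pres_rel_cancel_word[of b X "[]" "[]" R] assms by simp
  ultimately show "(a @ word_inv b, []) \<in> pres_rel X R"
    by (auto intro: pres_rel.trans)
next
  assume "(a @ word_inv b, []) \<in> pres_rel X R"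
  then have "([] @ (a @ word_inv b) @ b, [] @ [] @ b) \<in> pres_rel X R"
    using assms by (intro pres_rel_append_context) auto
  moreover have "(a @ word_inv b @ word_inv (word_inv b) @ [], a @ []) \<in> pres_rel X R"
    using pres_rel_cancel_word[of "word_inv b" X a "[]" R] assms by simp
  ultimately show "(a, b) \<in> pres_rel X R"
    by (auto intro: pres_rel.trans pres_rel.sym)
qed

lemma presented_group_carrier: "carrier (presented_group X R) = words X // pres_rel X R"
  by (simp add: presented_group_def)

lemma presented_group_carrier_rep:
  assumes "A \<in> carrier (presented_group X R)"
  shows "(SOME a. a \<in> A) \<in> words X \<and> A = pres_rel X R `` {SOME a. a \<in> A}"
proof -
  obtain a where a: "a \<in> words X" "A = pres_rel X R `` {a}"
    using assms by (auto simp: presented_group_carrier elim: quotientE)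
  then have "a \<in> A" by (auto intro: pres_rel.refl)
  then have "(SOME a. a \<in> A) \<in> A" by (rule someI)
  then have "(a, SOME a. a \<in> A) \<in> pres_rel X R" using a by simp
  then show ?thesis using a equiv_class_eq[OF equiv_pres_rel] pres_rel_words by blast
qed

lemma presented_group_mult_class:
  assumes "a \<in> words X" "b \<in> words X"
  shows "pres_rel X R `` {a} \<otimes>\<^bsub>presented_group X R\<^esub> pres_rel X R `` {b} = pres_rel X R `` {a @ b}"
proof -
  let ?r = "pres_rel X R"
  define a' where "a' = (SOME a'. a' \<in> ?r `` {a})"
  define b' where "b' = (SOME b'. b' \<in> ?r `` {b})"
  have aa': "(a, a') \<in> ?r"
    using someI[of "\<lambda>a'. a' \<in> ?r `` {a}" a] assms by (simp add: a'_def pres_rel.refl)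
  have bb': "(b, b') \<in> ?r"
    using someI[of "\<lambda>b'. b' \<in> ?r `` {b}" b] assms by (simp add: b'_def pres_rel.refl)
  have "(a @ b @ [], a' @ b @ []) \<in> ?r"
    using pres_rel_append_context[OF aa', of "[]" b] assms by simp
  moreover have "(a' @ b @ [], a' @ b' @ []) \<in> ?r"
    using pres_rel_append_context[OF bb', of a' "[]"] pres_rel_words[OF aa'] by simp
  ultimately have "?r `` {a @ b} = ?r `` {a' @ b'}"
    by (intro equiv_class_eq[OF equiv_pres_rel]) (auto intro: pres_rel.trans)
  then show ?thesis by (simp add: presented_group_def a'_def b'_def)
qed

definition word_subst :: "('g \<times> bool \<Rightarrow> 'h word) \<Rightarrow> 'g word \<Rightarrow> 'h word" where
  "word_subst f w = concat (map f w)"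

lemma word_subst_Nil [simp]: "word_subst f [] = []"
  and word_subst_Cons [simp]: "word_subst f (l # w) = f l @ word_subst f w"
  and word_subst_append [simp]: "word_subst f (u @ w) = word_subst f u @ word_subst f w"
  by (simp_all add: word_subst_def)

definition subst_hom :: "'h set \<Rightarrow> 'h word set \<Rightarrow> ('g \<times> bool \<Rightarrow> 'h word) \<Rightarrow> 'g word set \<Rightarrow> 'h word set" where
  "subst_hom Y S f A = pres_rel Y S `` {word_subst f (SOME a. a \<in> A)}"

locale presentation_morphism =
  fixes X :: "'g set" and R :: "'g word set" and Y :: "'h set" and S :: "'h word set"
    and f :: "'g \<times> bool \<Rightarrow> 'h word"
  assumes letter_words: "fst l \<in> X \<Longrightarrow> f l \<in> words Y"
    and letter_inv: "f (letter_inv l) = word_inv (f l)"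
    and relator_trivial: "r \<in> R \<Longrightarrow> r \<in> words X \<Longrightarrow> (word_subst f r, []) \<in> pres_rel Y S"
begin

lemma word_subst_words: "w \<in> words X \<Longrightarrow> word_subst f w \<in> words Y"
  by (induction w) (auto simp: letter_words)

lemma word_subst_pres_rel:
  "(u, v) \<in> pres_rel X R \<Longrightarrow> (word_subst f u, word_subst f v) \<in> pres_rel Y S"
proof (induction rule: pres_rel.induct)
  case (refl w)
  then show ?case by (simp add: word_subst_words pres_rel.refl)
next
  case (sym u v)
  then show ?case by (blast intro: pres_rel.sym)
next
  case (trans u v w)
  then show ?case by (blast intro: pres_rel.trans)
next
  case (cancel u v a b)
  have "f (a, \<not> b) = word_inv (f (a, b))"
    using letter_inv[of "(a, b)"] by (simp add: letter_inv_def)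
  then show ?case
    using pres_rel_cancel_word[of "f (a, b)" Y "word_subst f u" "word_subst f v" S] cancel
      letter_words[of "(a, b)"] word_subst_words by simp
next
  case (relator u v r)
  then show ?case
    using pres_rel_append_context[OF relator_trivial, of r "word_subst f u" "word_subst f v"]
      word_subst_words by simp
qed

lemma subst_hom_class:
  assumes "a \<in> words X"
  shows "subst_hom Y S f (pres_rel X R `` {a}) = pres_rel Y S `` {word_subst f a}"
proof -
  have "a \<in> pres_rel X R `` {a}" using assms pres_rel.refl by auto
  then have "(SOME a'. a' \<in> pres_rel X R `` {a}) \<in> pres_rel X R `` {a}" by (rule someI)
  then have "(word_subst f a, word_subst f (SOME a'. a' \<in> pres_rel X R `` {a})) \<in> pres_rel Y S"
    by (simp add: word_subst_pres_rel)
  then show ?thesis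
    unfolding subst_hom_def by (rule equiv_class_eq[OF equiv_pres_rel, symmetric])
qed

lemma subst_hom_hom: "subst_hom Y S f \<in> hom (presented_group X R) (presented_group Y S)"
proof (rule homI)
  fix A assume "A \<in> carrier (presented_group X R)"
  then have "word_subst f (SOME a. a \<in> A) \<in> words Y"
    using presented_group_carrier_rep word_subst_words by blast
  then show "subst_hom Y S f A \<in> carrier (presented_group Y S)"
    by (simp add: subst_hom_def presented_group_carrier quotientI)
next
  fix A B
  assume "A \<in> carrier (presented_group X R)" "B \<in> carrier (presented_group X R)"
  then obtain a b where ab: "a \<in> words X" "A = pres_rel X R `` {a}" "b \<in> words X" "B = pres_rel X R `` {b}"
    using presented_group_carrier_rep by metis
  then show "subst_hom Y S f (A \<otimes>\<^bsub>presented_group X R\<^esub> B) =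
      subst_hom Y S f A \<otimes>\<^bsub>presented_group Y S\<^esub> subst_hom Y S f B"
    by (simp add: presented_group_mult_class subst_hom_class word_subst_words)
qed

end

lemma discriminated_by_separating_family:
  fixes h :: "nat \<Rightarrow> 'a \<Rightarrow> 'b"
  assumes hom: "\<And>N. h N \<in> hom H G"
    and separates: "\<And>A B. A \<in> carrier H \<Longrightarrow> B \<in> carrier H \<Longrightarrow> A \<noteq> B \<Longrightarrow>
      finite {N. h N A = h N B}"
  shows "discriminated_by H G"
  unfolding discriminated_by_def
proof (intro allI impI)
  fix S assume S: "S \<subseteq> carrier H \<and> finite S"
  define P where "P = {(A, B). A \<in> S \<and> B \<in> S \<and> A \<noteq> B}"
  have "finite P"
    using S by (auto simp: P_def intro: finite_subset[of _ "S \<times> S"])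
  moreover have "finite {N. h N A = h N B}" if "(A, B) \<in> P" for A B
    using that S separates by (auto simp: P_def)
  ultimately have "finite (\<Union>(A, B) \<in> P. {N. h N A = h N B})" by auto
  then obtain N where N: "N \<notin> (\<Union>(A, B) \<in> P. {N. h N A = h N B})"
    using ex_new_if_finite[OF infinite_UNIV_nat] by blast
  have "inj_on (h N) S"
  proof (rule inj_onI, rule ccontr)
    fix A B assume "A \<in> S" "B \<in> S" "h N A = h N B" "A \<noteq> B"
    then show False using N by (auto simp: P_def)
  qed
  then show "\<exists>h\<in>hom H G. inj_on h S" using hom by blast
qed

definition letters_commute :: "'g set \<Rightarrow> 'g word set \<Rightarrow> 'g \<times> bool \<Rightarrow> 'g \<times> bool \<Rightarrow> bool" where
  "letters_commute X R l z \<longleftrightarrow>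
    (\<forall>p q. p \<in> words X \<longrightarrow> q \<in> words X \<longrightarrow> (p @ l # z # q, p @ z # l # q) \<in> pres_rel X R)"

lemma letters_commute_sym: "letters_commute X R l z \<Longrightarrow> letters_commute X R z l"
  unfolding letters_commute_def by (blast intro: pres_rel.sym)

lemma letters_commuteD: "letters_commute X R l z \<Longrightarrow> ([l, z], [z, l]) \<in> pres_rel X R"
  unfolding letters_commute_def by (metis append_Nil words_Nil)

lemma letters_commute_letter_inv:
  assumes lz: "letters_commute X R (a, b) z" and "a \<in> X" "fst z \<in> X"
  shows "letters_commute X R (a, \<not> b) z"
  unfolding letters_commute_def
proof (intro allI impI)
  fix p q assume "p \<in> words X" "q \<in> words X"
  with assms have "(p @ (a, \<not> b) # z # (a, b) # (a, \<not> b) # q, p @ (a, \<not> b) # z # q) \<in> pres_rel X R"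
    and "(p @ (a, \<not> b) # (a, b) # z # (a, \<not> b) # q, p @ (a, \<not> b) # z # (a, b) # (a, \<not> b) # q)
      \<in> pres_rel X R"
    and "(p @ (a, \<not> b) # (a, b) # z # (a, \<not> b) # q, p @ z # (a, \<not> b) # q) \<in> pres_rel X R"
    using pres_rel_cancel_letter[of "p @ [(a, \<not> b), z]" X q a b R]
      lz[unfolded letters_commute_def, rule_format, of "p @ [(a, \<not> b)]" "(a, \<not> b) # q"]
      pres_rel_cancel_letter[of p X "z # (a, \<not> b) # q" a "\<not> b" R]
    by simp_all
  then show "(p @ (a, \<not> b) # z # q, p @ z # (a, \<not> b) # q) \<in> pres_rel X R"
    by (meson pres_rel.sym pres_rel.trans)
qed

text \<open>The relator [a, b] only lets the positive letters a and b commute; the inverse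
  letters follow by inserting cancelling pairs.\<close>

lemma letters_commute_if_relator:
  assumes r: "commutator_word [(a, False)] [(b, False)] \<in> R" and ab: "a \<in> X" "b \<in> X"
  shows "letters_commute X R (a, c) (b, d)"
proof -
  have "letters_commute X R (a, False) (b, False)"
    unfolding letters_commute_def
  proof (intro allI impI)
    fix p q assume pq: "p \<in> words X" "q \<in> words X"
    let ?r = "commutator_word [(a, False)] [(b, False)]"
    have "?r \<in> words X"
      using ab by (simp add: commutator_word_def word_inv_def)
    then have "(p @ ?r @ (b, False) # (a, False) # q, p @ (b, False) # (a, False) # q) \<in> pres_rel X R"
      using pres_rel.relator[of p X "(b, False) # (a, False) # q" ?r R] r pq ab by simp
    moreover have "(p @ ?r @ (b, False) # (a, False) # q, p @ (a, False) # (b, False) # (a, True) # (a, False) # q)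
        \<in> pres_rel X R"
      using pres_rel_cancel_letter[of "p @ [(a, False), (b, False), (a, True)]" X "(a, False) # q" b True R] pq ab
      by (simp add: commutator_word_def word_inv_def)
    moreover have "(p @ (a, False) # (b, False) # (a, True) # (a, False) # q, p @ (a, False) # (b, False) # q)
        \<in> pres_rel X R"
      using pres_rel_cancel_letter[of "p @ [(a, False), (b, False)]" X q a True R] pq ab by simp
    ultimately show "(p @ (a, False) # (b, False) # q, p @ (b, False) # (a, False) # q) \<in> pres_rel X R"
      by (meson pres_rel.sym pres_rel.trans)
  qed
  then have "letters_commute X R (a, c) (b, False)"
    using letters_commute_letter_inv[of X R a False] ab by (cases c) auto
  then have "letters_commute X R (b, False) (a, c)"
    by (rule letters_commute_sym)
  then have "letters_commute X R (b, d) (a, c)"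
    using letters_commute_letter_inv[of X R b False] ab by (cases d) auto
  then show ?thesis by (rule letters_commute_sym)
qed

lemma letters_commute_same_gen:
  assumes "a \<in> X"
  shows "letters_commute X R (a, c) (a, d)"
  unfolding letters_commute_def
proof (intro allI impI)
  fix p q assume pq: "p \<in> words X" "q \<in> words X"
  show "(p @ (a, c) # (a, d) # q, p @ (a, d) # (a, c) # q) \<in> pres_rel X R"
  proof (cases "c = d")
    case True
    then show ?thesis using pq assms by (simp add: pres_rel.refl)
  next
    case False
    then have "(p @ (a, c) # (a, d) # q, p @ q) \<in> pres_rel X R"
      and "(p @ (a, d) # (a, c) # q, p @ q) \<in> pres_rel X R"
      using pres_rel_cancel_letter[of p X q a c R] pres_rel_cancel_letter[of p X q a d R] pq assms
      by (auto simp: eq_commute[of d] dest: sym)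
    then show ?thesis by (blast intro: pres_rel.sym pres_rel.trans)
  qed
qed

lemma pres_rel_move_left:
  assumes "\<forall>z\<in>set m. letters_commute X R l z" "fst l \<in> X" "m \<in> words X"
    and "p \<in> words X" "q \<in> words X"
  shows "(p @ m @ l # q, p @ l # m @ q) \<in> pres_rel X R"
  using assms
proof (induction m arbitrary: p)
  case Nil
  then show ?case by (simp add: pres_rel.refl)
next
  case (Cons z m)
  have "((p @ [z]) @ m @ l # q, (p @ [z]) @ l # m @ q) \<in> pres_rel X R"
    using Cons.IH[of "p @ [z]"] Cons.prems by simp
  moreover have "(p @ z # l # m @ q, p @ l # z # m @ q) \<in> pres_rel X R"
    using Cons.prems by (simp add: letters_commute_def pres_rel.sym)
  ultimately show ?case by (simp add: pres_rel.trans)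
qed

lemma commutator_trivial_if_commute:
  assumes "(a @ b, b @ a) \<in> pres_rel X R" "a \<in> words X" "b \<in> words X"
  shows "(commutator_word a b, []) \<in> pres_rel X R"
proof -
  have "((a @ b) @ word_inv a @ word_inv b, (b @ a) @ word_inv a @ word_inv b) \<in> pres_rel X R"
    using pres_rel_append_context[OF assms(1), of "[]" "word_inv a @ word_inv b"] assms by simp
  moreover have "(b @ a @ word_inv a @ word_inv b, b @ word_inv b) \<in> pres_rel X R"
    using pres_rel_cancel_word[of a X b "word_inv b" R] assms by simp
  moreover have "(b @ word_inv b, []) \<in> pres_rel X R"
    using pres_rel_cancel_word[of b X "[]" "[]" R] assms by simp
  ultimately show ?thesis
    unfolding commutator_word_def by (metis append.assoc pres_rel.trans)
qed

section \<open>Reduced words in partially commutative groups\<close>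

text \<open>Reduced words are detected by an action on families of words
  indexed by pairs of vertices: the state of a reduced word u consists of its projections
  onto all pairs of non-adjacent vertices, and a letter either cancels against the common
  first letter of all projections involving its vertex or is prepended to them.\<close>

locale pc_graph =
  fixes E :: "('v \<times> 'v) set"
  assumes sym_E: "sym E" and irrefl_E: "irrefl E"
begin

lemma E_sym: "(a, b) \<in> E \<Longrightarrow> (b, a) \<in> E"
  using sym_E by (auto simp: sym_def)

lemma E_irrefl [simp]: "(a, a) \<notin> E"
  using irrefl_E by (auto simp: irrefl_def)

definition visible :: "'v \<Rightarrow> bool \<Rightarrow> 'v word \<Rightarrow> bool" where
  "visible v e u \<longleftrightarrow> (\<exists>p r. u = p @ (v, e) # r \<and> (\<forall>z\<in>set p. (v, fst z) \<in> E))"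

fun reduced :: "'v word \<Rightarrow> bool" where
  "reduced [] = True"
| "reduced (l # r) = (\<not> visible (fst l) (\<not> snd l) r \<and> reduced r)"

definition proj :: "'v word \<Rightarrow> 'v \<Rightarrow> 'v \<Rightarrow> 'v word" where
  "proj u a b = (if (a, b) \<in> E then [] else filter (\<lambda>z. fst z = a \<or> fst z = b) u)"

definition pops :: "'v \<Rightarrow> bool \<Rightarrow> ('v \<Rightarrow> 'v \<Rightarrow> 'v word) \<Rightarrow> bool" where
  "pops v e s \<longleftrightarrow> (\<forall>w. (v, w) \<notin> E \<longrightarrow> s v w \<noteq> [] \<and> hd (s v w) = (v, \<not> e))"

definition letter_act :: "'v \<times> bool \<Rightarrow> ('v \<Rightarrow> 'v \<Rightarrow> 'v word) \<Rightarrow> ('v \<Rightarrow> 'v \<Rightarrow> 'v word)" where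
  "letter_act l s = (if pops (fst l) (snd l) s
     then (\<lambda>a b. if (a, b) \<notin> E \<and> (a = fst l \<or> b = fst l) then tl (s a b) else s a b)
     else (\<lambda>a b. if (a, b) \<notin> E \<and> (a = fst l \<or> b = fst l) then l # s a b else s a b))"

fun word_act :: "'v word \<Rightarrow> ('v \<Rightarrow> 'v \<Rightarrow> 'v word) \<Rightarrow> ('v \<Rightarrow> 'v \<Rightarrow> 'v word)" where
  "word_act [] s = s"
| "word_act (l # w) s = letter_act l (word_act w s)"

definition states :: "('v \<Rightarrow> 'v \<Rightarrow> 'v word) set" where
  "states = {proj u | u. reduced u}"

lemma visible_Cons: "visible v e (y # u) \<longleftrightarrow> y = (v, e) \<or> ((v, fst y) \<in> E \<and> visible v e u)"
proof
  assume "visible v e (y # u)"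
  then obtain p r where pr: "y # u = p @ (v, e) # r" and p: "\<forall>z\<in>set p. (v, fst z) \<in> E"
    by (auto simp: visible_def)
  then show "y = (v, e) \<or> ((v, fst y) \<in> E \<and> visible v e u)"
    unfolding visible_def by (cases p) auto
next
  assume "y = (v, e) \<or> ((v, fst y) \<in> E \<and> visible v e u)"
  then show "visible v e (y # u)"
    unfolding visible_def by (metis append_Cons append_Nil empty_iff list.set(1) set_ConsD fst_conv)
qed

lemma visible_skip:
  assumes "visible v e (p @ r)" "\<forall>z\<in>set p. (v, fst z) \<in> E"
  shows "visible v e r"
  using assms by (induction p) (auto simp: visible_Cons)

lemma visible_insert:
  assumes "visible v e (a @ b)" "(v, fst l) \<in> E"
  shows "visible v e (a @ l # b)"
  using assms by (induction a) (auto simp: visible_Cons)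

lemma visible_append_block:
  assumes "visible v e (xs @ u)" "\<forall>y\<in>set xs. fst y = g" "v \<noteq> g" "xs \<noteq> []"
  shows "(v, g) \<in> E \<and> visible v e u"
  using assms
proof (induction xs)
  case Nil
  then show ?case by simp
next
  case (Cons y xs)
  then show ?case by (cases xs) (auto simp: visible_Cons)
qed

lemma reduced_appendD: "reduced (a @ b) \<Longrightarrow> reduced b"
  by (induction a) auto

lemma reduced_remove:
  "reduced (p @ l # r) \<Longrightarrow> \<forall>z\<in>set p. (fst l, fst z) \<in> E \<Longrightarrow> reduced (p @ r)"
proof (induction p)
  case Nil
  then show ?case by simp
next
  case (Cons y p)
  then have "(fst y, fst l) \<in> E" by (auto dest: E_sym)
  then show ?case
    using Cons visible_insert[of "fst y" "\<not> snd y" p r l] by auto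
qed

lemma filter_adjacent_Nil:
  assumes "\<forall>z\<in>set p. (v, fst z) \<in> E" "(a, b) \<notin> E" "a = v \<or> b = v"
  shows "filter (\<lambda>z. fst z = a \<or> fst z = b) p = []"
  using assms by (auto simp: filter_empty_conv dest: E_sym)

lemma proj_move_front:
  assumes "\<forall>z\<in>set p. (v, fst z) \<in> E"
  shows "proj (p @ (v, e) # r) = proj ((v, e) # p @ r)"
proof (intro ext)
  fix a b
  show "proj (p @ (v, e) # r) a b = proj ((v, e) # p @ r) a b"
    using filter_adjacent_Nil[OF assms, of a b] by (cases "a = v \<or> b = v") (auto simp: proj_def)
qed

lemma pops_proj_iff_visible: "pops v e (proj u) \<longleftrightarrow> visible v (\<not> e) u"
proof
  assume "visible v (\<not> e) u"
  then obtain p r where u: "u = p @ (v, \<not> e) # r" and p: "\<forall>z\<in>set p. (v, fst z) \<in> E"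
    by (auto simp: visible_def)
  show "pops v e (proj u)"
    unfolding pops_def proj_def using filter_adjacent_Nil[OF p] u by auto
next
  assume pops: "pops v e (proj u)"
  define p where "p = takeWhile (\<lambda>z. (v, fst z) \<in> E) u"
  define q where "q = dropWhile (\<lambda>z. (v, fst z) \<in> E) u"
  have u: "u = p @ q" by (simp add: p_def q_def)
  have p: "\<forall>z\<in>set p. (v, fst z) \<in> E" unfolding p_def by (meson set_takeWhileD)
  show "visible v (\<not> e) u"
  proof (cases q)
    case Nil
    then show ?thesis
      using pops u filter_adjacent_Nil[OF p, of v v] unfolding pops_def proj_def by (auto dest: spec[of _ v])
  next
    case (Cons z r)
    have nz: "(v, fst z) \<notin> E" using Cons q_def by (metis dropWhile_eq_Cons_conv)
    then have "hd (proj u v (fst z)) = z"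
      using filter_adjacent_Nil[OF p nz] u Cons by (simp add: proj_def)
    moreover have "hd (proj u v (fst z)) = (v, \<not> e)" using pops nz unfolding pops_def by blast
    ultimately show ?thesis using u Cons p unfolding visible_def by auto
  qed
qed

lemma letter_act_cancel:
  assumes u: "u = p @ (v, \<not> e) # r" and p: "\<forall>z\<in>set p. (v, fst z) \<in> E"
  shows "letter_act (v, e) (proj u) = proj (p @ r)"
proof (intro ext)
  fix a b
  have "pops v e (proj u)" using pops_proj_iff_visible u p unfolding visible_def by blast
  then show "letter_act (v, e) (proj u) a b = proj (p @ r) a b"
    using filter_adjacent_Nil[OF p, of a b] u
    by (cases "(a, b) \<notin> E \<and> (a = v \<or> b = v)") (auto simp: letter_act_def proj_def)
qed

lemma letter_act_push:
  assumes "\<not> visible v (\<not> e) u"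
  shows "letter_act (v, e) (proj u) = proj ((v, e) # u)"
  using assms by (intro ext) (auto simp: letter_act_def proj_def pops_proj_iff_visible)

lemma letter_act_states: "s \<in> states \<Longrightarrow> letter_act l s \<in> states"
proof -
  assume "s \<in> states"
  then obtain u where s: "s = proj u" and r: "reduced u" by (auto simp: states_def)
  obtain v e where l: "l = (v, e)" by (cases l)
  show ?thesis
  proof (cases "visible v (\<not> e) u")
    case True
    then obtain p q where u: "u = p @ (v, \<not> e) # q" and p: "\<forall>z\<in>set p. (v, fst z) \<in> E"
      by (auto simp: visible_def)
    have "reduced (p @ q)" using reduced_remove[of p "(v, \<not> e)" q] r u p by auto
    then show ?thesis using letter_act_cancel[OF u p] s l by (auto simp: states_def)
  next
    case False
    then show ?thesis using letter_act_push[OF False] s l r by (auto simp: states_def)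
  qed
qed

lemma letter_act_inverse: "s \<in> states \<Longrightarrow> letter_act (v, \<not> e) (letter_act (v, e) s) = s"
proof -
  assume "s \<in> states"
  then obtain u where s: "s = proj u" and r: "reduced u" by (auto simp: states_def)
  show ?thesis
  proof (cases "visible v (\<not> e) u")
    case True
    then obtain p q where u: "u = p @ (v, \<not> e) # q" and p: "\<forall>z\<in>set p. (v, fst z) \<in> E"
      by (auto simp: visible_def)
    have "reduced ((v, \<not> e) # q)" using r u reduced_appendD by blast
    then have "\<not> visible v (\<not> \<not> e) (p @ q)" using visible_skip[of v e p q] p by auto
    then have "letter_act (v, \<not> e) (proj (p @ q)) = proj ((v, \<not> e) # p @ q)"
      by (rule letter_act_push)
    also have "\<dots> = proj u" using proj_move_front[OF p] u by simp
    finally show ?thesis using letter_act_cancel[OF u p] s by simp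
  next
    case False
    have "letter_act (v, \<not> e) (proj ((v, e) # u)) = proj ([] @ u)"
      using letter_act_cancel[of "(v, e) # u" "[]" v "\<not> e" u] by simp
    then show ?thesis using letter_act_push[OF False] s by simp
  qed
qed

lemma letter_act_commute:
  assumes "(v, a) \<in> E"
  shows "letter_act (v, e) (letter_act (a, d) s) = letter_act (a, d) (letter_act (v, e) s)"
proof -
  have "v \<noteq> a" "(a, v) \<in> E" using assms E_sym by auto
  moreover have "pops v e (letter_act (a, d) s) = pops v e s"
    and "pops a d (letter_act (v, e) s) = pops a d s"
    unfolding pops_def letter_act_def using assms calculation by auto
  ultimately show ?thesis
    using assms by (intro ext) (auto simp: letter_act_def)
qed

lemma word_act_append: "word_act (u @ w) s = word_act u (word_act w s)"
  by (induction u) auto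

lemma word_act_states: "s \<in> states \<Longrightarrow> word_act w s \<in> states"
  by (induction w) (auto intro: letter_act_states)

lemma proj_Nil_states: "proj [] \<in> states"
  by (auto simp: states_def intro: exI[of _ "[]"])

lemma word_act_pres_rel:
  assumes "(w, w') \<in> pres_rel X (pc_relators V E)" "s \<in> states"
  shows "word_act w s = word_act w' s"
  using assms
proof (induction arbitrary: s rule: pres_rel.induct)
  case (cancel u v a b)
  then have "letter_act (a, b) (letter_act (a, \<not> b) (word_act v s)) = word_act v s"
    using letter_act_inverse[of "word_act v s" a "\<not> b"] word_act_states by simp
  then show ?case by (simp add: word_act_append)
next
  case (relator u v r)
  then obtain a b where r: "r = commutator_word [(a, False)] [(b, False)]" and "(b, a) \<in> E"
    by (auto simp: pc_relators_def dest: E_sym)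
  let ?t = "word_act v s"
  have t: "?t \<in> states" using relator word_act_states by blast
  have "word_act r ?t =
      letter_act (a, False) (letter_act (a, True) (letter_act (b, False) (letter_act (b, True) ?t)))"
    using letter_act_commute[OF \<open>(b, a) \<in> E\<close>, of False True "letter_act (b, True) ?t"]
    by (simp add: r commutator_word_def word_inv_def)
  also have "\<dots> = ?t"
    using letter_act_inverse[OF t, of b True] t
      letter_act_inverse[of "letter_act (b, False) (letter_act (b, True) ?t)" a True]
      letter_act_states[OF letter_act_states[OF t], of "(b, False)"]
    by simp
  finally show ?case by (simp add: word_act_append)
qed auto

lemma proj_eq_Nil_iff: "proj u = proj [] \<longleftrightarrow> u = []"
proof
  assume "proj u = proj []"
  show "u = []"
  proof (cases u)
    case (Cons l u')
    then have "proj u (fst l) (fst l) \<noteq> []" by (simp add: proj_def)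
    then show ?thesis using \<open>proj u = proj []\<close> by (simp add: proj_def)
  qed
qed simp

lemma word_act_nontrivial:
  assumes "word_act w (proj []) = proj u" "u \<noteq> []"
  shows "(w, []) \<notin> pres_rel X (pc_relators V E)"
  using assms word_act_pres_rel[OF _ proj_Nil_states] proj_eq_Nil_iff by fastforce

definition sgnb :: "bool \<Rightarrow> int" where
  "sgnb b = (if b then -1 else 1)"

definition exp_sum :: "'v word \<Rightarrow> int" where
  "exp_sum z = sum_list (map (\<lambda>l. sgnb (snd l)) z)"

lemma exp_sum_simps [simp]:
  "exp_sum [] = 0" "exp_sum (l # z) = sgnb (snd l) + exp_sum z" "exp_sum (a @ b) = exp_sum a + exp_sum b"
  by (auto simp: exp_sum_def)

lemma exp_sum_replicate: "exp_sum (replicate k l) = int k * sgnb (snd l)"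
  by (induction k) (auto simp: algebra_simps)

definition vpow :: "'v \<Rightarrow> int \<Rightarrow> 'v word" where
  "vpow v n = replicate (nat \<bar>n\<bar>) (v, n < 0)"

lemma vpow_0 [simp]: "vpow v 0 = []"
  by (simp add: vpow_def)

lemma vpow_nonzero:
  assumes "n \<noteq> 0"
  shows "vpow v n = (v, n < 0) # vpow v (n - sgnb (n < 0))"
proof -
  have "nat \<bar>n\<bar> = Suc (nat \<bar>n - sgnb (n < 0)\<bar>)"
    using assms by (cases "n < 0") (auto simp: sgnb_def)
  moreover have "n - sgnb (n < 0) \<noteq> 0 \<Longrightarrow> (n - sgnb (n < 0) < 0) = (n < 0)"
    using assms by (auto simp: sgnb_def)
  ultimately show ?thesis
    unfolding vpow_def by (cases "n - sgnb (n < 0) = 0") auto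
qed

lemma letter_act_vertex_power:
  assumes "reduced (vpow v n @ u)" "\<forall>e. \<not> visible v e u"
  shows "letter_act (v, b) (proj (vpow v n @ u)) = proj (vpow v (sgnb b + n) @ u) \<and>
    reduced (vpow v (sgnb b + n) @ u)"
proof (cases "n = 0")
  case True
  moreover have "vpow v (sgnb b) = [(v, b)]" by (cases b) (auto simp: vpow_def sgnb_def)
  ultimately show ?thesis using assms letter_act_push by simp
next
  case False
  have split: "vpow v n @ u = (v, n < 0) # (vpow v (n - sgnb (n < 0)) @ u)"
    using vpow_nonzero[OF False] by simp
  show ?thesis
  proof (cases "(n < 0) = (\<not> b)")
    case True
    then have "letter_act (v, b) (proj (vpow v n @ u)) = proj (vpow v (sgnb b + n) @ u)"
      using letter_act_cancel[of "vpow v n @ u" "[]" v b] split by (auto simp: sgnb_def add.commute)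
    moreover have "reduced (vpow v (sgnb b + n) @ u)"
      using assms(1) split True by (auto simp: sgnb_def add.commute)
    ultimately show ?thesis by simp
  next
    case False
    then have b: "b = (n < 0)" by auto
    then have not_vis: "\<not> visible v (\<not> b) (vpow v n @ u)" using split visible_Cons by simp
    have "nat \<bar>sgnb b + n\<bar> = Suc (nat \<bar>n\<bar>)" "(sgnb b + n < 0) = b"
      using b \<open>n \<noteq> 0\<close> by (auto simp: sgnb_def)
    then have "(v, b) # vpow v n @ u = vpow v (sgnb b + n) @ u"
      using b by (simp add: vpow_def)
    then show ?thesis
      using letter_act_push[OF not_vis] assms(1) not_vis by (metis reduced.simps(2) fst_conv snd_conv)
  qed
qed

lemma word_act_vertex_block:
  assumes "reduced u" "\<forall>e. \<not> visible v e u" "\<forall>l\<in>set z. fst l = v"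
  shows "word_act z (proj u) = proj (vpow v (exp_sum z) @ u) \<and> reduced (vpow v (exp_sum z) @ u)"
  using assms(3)
proof (induction z)
  case Nil
  then show ?case using assms by simp
next
  case (Cons l z)
  then obtain b where "l = (v, b)" by (cases l) auto
  then show ?case using Cons letter_act_vertex_power[of v "exp_sum z" u b] assms(2) by auto
qed

end

section \<open>Normal forms in the extension\<close>

locale ext_setup =
  fixes V :: "'v set" and E :: "('v \<times> 'v) set" and x :: 'v and m :: nat
  assumes graph: "simplicial_graph V E" and x_in_V: "x \<in> V"
begin

sublocale pc_graph E
  using graph by unfold_locales (auto simp: simplicial_graph_def)

abbreviation "RG \<equiv> pc_relators V E"
abbreviation "relG \<equiv> pres_rel V RG"
abbreviation "XH \<equiv> ext_gens V m"
abbreviation "RH \<equiv> ext_relators V E x m"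
abbreviation "relH \<equiv> pres_rel XH RH"

lemma edge_in_V: "(a, b) \<in> E \<Longrightarrow> a \<in> V \<and> b \<in> V"
  using graph by (auto simp: simplicial_graph_def)

text \<open>The generators of A behave like x: they commute with x and with every vertex
  adjacent to x.\<close>

definition base :: "'v + nat \<Rightarrow> 'v" where
  "base g = (case g of Inl v \<Rightarrow> v | Inr _ \<Rightarrow> x)"

lemma base_simps [simp]: "base (Inl v) = v" "base (Inr i) = x"
  by (auto simp: base_def)

definition at_x :: "('v + nat) \<times> bool \<Rightarrow> bool" where
  "at_x l \<longleftrightarrow> base (fst l) = x"

definition hcommute :: "('v + nat) \<times> bool \<Rightarrow> ('v + nat) \<times> bool \<Rightarrow> bool" where
  "hcommute l z \<longleftrightarrow> (at_x l \<and> at_x z) \<or> (base (fst l), base (fst z)) \<in> E"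

lemma hcommute_letter_inv [simp]: "hcommute (letter_inv l) z = hcommute l z"
  by (simp add: hcommute_def at_x_def letter_inv_def)

lemma at_x_cases: "at_x l \<Longrightarrow> fst l = Inl x \<or> (\<exists>i. fst l = Inr i)"
  by (cases "fst l") (auto simp: at_x_def)

lemma lift_word_commutator:
  "lift_word (commutator_word u w) = commutator_word (lift_word u) (lift_word w)"
  by (simp add: lift_word_def commutator_word_def word_inv_def rev_map case_prod_beta)

lemma adjacent_centralizes_x:
  assumes "u \<in> V" "u = x \<or> (u, x) \<in> E"
  shows "relG `` {[(u, False)]} \<in> centralizer (pc_group V E) (relG `` {[(x, False)]})"
proof -
  have "relG `` {[(u, False)] @ [(x, False)]} = relG `` {[(x, False)] @ [(u, False)]}"
  proof (cases "u = x")
    case False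
    then have "(u, x) \<in> E" using assms by auto
    then have "letters_commute V RG (u, False) (x, False)"
      using edge_in_V by (intro letters_commute_if_relator) (auto simp: pc_relators_def)
    then show ?thesis
      using equiv_class_eq[OF equiv_pres_rel letters_commuteD] by simp
  qed simp
  then show ?thesis
    using assms x_in_V presented_group_mult_class[of "[(u, False)]" V "[(x, False)]" RG]
      presented_group_mult_class[of "[(x, False)]" V "[(u, False)]" RG]
    by (simp add: centralizer_def pc_group_def presented_group_carrier quotientI)
qed

lemma ext_relator_if_hcommute:
  assumes "g \<in> XH" "k \<in> XH" "g \<noteq> k" "hcommute (g, c) (k, d)"
  shows "commutator_word [(g, False)] [(k, False)] \<in> RH \<or> commutator_word [(k, False)] [(g, False)] \<in> RH"
proof -
  have A_rel: "commutator_word [(Inr i, False)] [(Inl u, False)] \<in> RH"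
    if "Inl u \<in> XH" "Inr i \<in> XH" "u = x \<or> (u, x) \<in> E" for u i
    using that adjacent_centralizes_x[of u]
    unfolding ext_relators_def ext_gens_def
    by (intro UnI2) (auto simp: lift_word_def intro!: exI[of _ "[(u, False)]"])
  show ?thesis
  proof (cases g; cases k)
    fix u v assume "g = Inl u" "k = Inl v"
    then have "lift_word (commutator_word [(u, False)] [(v, False)]) \<in> lift_word ` RG"
      using assms by (auto simp: hcommute_def at_x_def pc_relators_def)
    then show ?thesis
      using \<open>g = Inl u\<close> \<open>k = Inl v\<close> lift_word_commutator[of "[(u, False)]" "[(v, False)]"]
      unfolding ext_relators_def by (simp add: lift_word_def)
  next
    fix u i assume "g = Inl u" "k = Inr i"
    then show ?thesis using assms A_rel by (auto simp: hcommute_def at_x_def)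
  next
    fix i u assume "g = Inr i" "k = Inl u"
    then show ?thesis using assms A_rel by (auto simp: hcommute_def at_x_def dest: E_sym)
  next
    fix i j assume "g = Inr i" "k = Inr j"
    then show ?thesis using assms by (auto simp: ext_relators_def ext_gens_def)
  qed
qed

lemma hcommute_letters_commute:
  assumes "fst l \<in> XH" "fst z \<in> XH" "hcommute l z"
  shows "letters_commute XH RH l z"
proof (cases "fst l = fst z")
  case True
  then show ?thesis
    using letters_commute_same_gen[of "fst l" XH RH "snd l" "snd z"] assms by (metis prod.collapse)
next
  case False
  then consider "commutator_word [(fst l, False)] [(fst z, False)] \<in> RH"
    | "commutator_word [(fst z, False)] [(fst l, False)] \<in> RH"
    using ext_relator_if_hcommute[of "fst l" "fst z" "snd l" "snd z"] assms by auto
  then show ?thesis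
  proof cases
    case 1
    then show ?thesis
      using letters_commute_if_relator[OF 1, of XH "snd l" "snd z"] assms by simp
  next
    case 2
    then show ?thesis
      using letters_commute_sym[OF letters_commute_if_relator[OF 2, of XH "snd z" "snd l"]] assms by simp
  qed
qed

definition hvisible :: "('v + nat) \<times> bool \<Rightarrow> ('v + nat) word \<Rightarrow> bool" where
  "hvisible l r \<longleftrightarrow> (\<exists>p s. r = p @ letter_inv l # s \<and> (\<forall>z\<in>set p. hcommute l z))"

fun hreduced :: "('v + nat) word \<Rightarrow> bool" where
  "hreduced [] = True"
| "hreduced (l # r) = (\<not> hvisible l r \<and> hreduced r)"

text \<open>A letter at x could still be moved left across a nonempty run of letters not at x
  that commute with x.\<close>

definition x_gap :: "('v + nat) word \<Rightarrow> bool" where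
  "x_gap r \<longleftrightarrow> (\<exists>p l s. r = p @ l # s \<and> at_x l \<and> p \<noteq> [] \<and> (\<forall>z\<in>set p. \<not> at_x z \<and> (x, base (fst z)) \<in> E))"

fun x_gathered :: "('v + nat) word \<Rightarrow> bool" where
  "x_gathered [] = True"
| "x_gathered (l # r) = ((at_x l \<longrightarrow> \<not> x_gap r) \<and> x_gathered r)"

lemma hreduced_appendD: "hreduced (a @ b) \<Longrightarrow> hreduced b"
  by (induction a) auto

lemma x_gathered_appendD: "x_gathered (a @ b) \<Longrightarrow> x_gathered b"
  by (induction a) auto

lemma x_gathered_no_gap: "x_gathered (a @ l # b) \<Longrightarrow> at_x l \<Longrightarrow> \<not> x_gap b"
  by (induction a) auto

lemma not_hreduced: "\<not> hreduced w \<Longrightarrow> \<exists>a l r. w = a @ l # r \<and> hvisible l r"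
proof (induction w)
  case (Cons l w)
  show ?case
  proof (cases "hvisible l w")
    case True
    then show ?thesis by (intro exI[of _ "[]"]) auto
  next
    case False
    then obtain a l' r where "w = a @ l' # r \<and> hvisible l' r" using Cons by auto
    then show ?thesis by (intro exI[of _ "l # a"]) auto
  qed
qed simp

lemma not_x_gathered: "\<not> x_gathered w \<Longrightarrow> \<exists>a l r. w = a @ l # r \<and> at_x l \<and> x_gap r"
proof (induction w)
  case (Cons l w)
  show ?case
  proof (cases "at_x l \<and> x_gap w")
    case True
    then show ?thesis by (intro exI[of _ "[]"]) auto
  next
    case False
    then obtain a l' r where "w = a @ l' # r \<and> at_x l' \<and> x_gap r" using Cons by auto
    then show ?thesis by (intro exI[of _ "l # a"]) auto
  qed
qed simp

lemma hreduce_step: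
  assumes "\<not> hreduced w" "w \<in> words XH"
  obtains w' where "(w, w') \<in> relH" "w' \<in> words XH" "length w' < length w"
proof -
  obtain a l r where w: "w = a @ l # r" and "hvisible l r" using not_hreduced assms(1) by blast
  then obtain p s where r: "r = p @ letter_inv l # s" and p: "\<forall>z\<in>set p. hcommute l z"
    unfolding hvisible_def by blast
  have ws: "a \<in> words XH" "fst l \<in> XH" "p \<in> words XH" "s \<in> words XH"
    using assms(2) w r by (auto simp: letter_inv_def)
  have "\<forall>z\<in>set p. letters_commute XH RH (letter_inv l) z"
    using p ws by (auto simp: words_def intro: hcommute_letters_commute)
  then have "(a @ l # p @ letter_inv l # s, a @ l # letter_inv l # p @ s) \<in> relH"
    using pres_rel_move_left[of p XH RH "letter_inv l" "a @ [l]" s] ws by (simp add: letter_inv_def)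
  moreover have "(a @ l # letter_inv l # p @ s, a @ p @ s) \<in> relH"
    using pres_rel_cancel_letter[of a XH "p @ s" "fst l" "snd l" RH] ws by (cases l) (simp add: letter_inv_def)
  ultimately show thesis
    using that[of "a @ p @ s"] w r ws by (auto intro: pres_rel.trans)
qed

definition x_count :: "('v + nat) word \<Rightarrow> nat" where
  "x_count w = length (filter at_x w)"

lemma x_count_simps [simp]:
  "x_count [] = 0" "x_count (l # w) = (if at_x l then 1 else 0) + x_count w"
  "x_count (a @ b) = x_count a + x_count b"
  by (auto simp: x_count_def)

text \<open>Termination measure for gathering: it decreases when a letter at x moves left.\<close>

fun x_inversions :: "('v + nat) word \<Rightarrow> nat" where
  "x_inversions [] = 0"
| "x_inversions (l # w) = x_inversions w + x_count w"

lemma x_inversions_append: "x_inversions (a @ b) = x_inversions a + x_inversions b + length a * x_count b"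
  by (induction a) auto

lemma x_inversions_no_x: "\<forall>z\<in>set p. \<not> at_x z \<Longrightarrow> x_inversions p = 0 \<and> x_count p = 0"
  by (induction p) auto

lemma x_gather_step:
  assumes "\<not> x_gathered w" "w \<in> words XH"
  obtains w' where "(w, w') \<in> relH" "w' \<in> words XH" "length w' = length w"
    "x_inversions w' < x_inversions w"
proof -
  obtain a l r where w: "w = a @ l # r" and "at_x l" "x_gap r" using not_x_gathered assms(1) by blast
  then obtain p l' s where r: "r = p @ l' # s" and l': "at_x l'" and "p \<noteq> []"
    and p: "\<forall>z\<in>set p. \<not> at_x z \<and> (x, base (fst z)) \<in> E"
    unfolding x_gap_def by blast
  have ws: "a \<in> words XH" "fst l \<in> XH" "p \<in> words XH" "s \<in> words XH" "fst l' \<in> XH"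
    using assms(2) w r by auto
  have "\<forall>z\<in>set p. letters_commute XH RH l' z"
    using p ws hcommute_letters_commute l' by (auto simp: words_def hcommute_def at_x_def)
  then have "(w, a @ l # l' # p @ s) \<in> relH"
    using pres_rel_move_left[of p XH RH l' "a @ [l]" s] ws w r by simp
  moreover have "x_inversions (a @ l # l' # p @ s) < x_inversions w"
    using x_inversions_no_x[of p] p \<open>p \<noteq> []\<close> l' w r by (simp add: x_inversions_append)
  ultimately show thesis
    using that[of "a @ l # l' # p @ s"] ws w r by auto
qed

lemma exists_normal_rep:
  "w \<in> words XH \<Longrightarrow> \<exists>w'. (w, w') \<in> relH \<and> w' \<in> words XH \<and> hreduced w' \<and> x_gathered w'"
proof (induction w rule: wf_induct[OF wf_measures[of "[length, x_inversions]"]])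
  case (1 w)
  note IH = "1"(1)[rule_format] and w = "1"(2)
  consider "\<not> hreduced w" | "\<not> x_gathered w" | "hreduced w \<and> x_gathered w" by blast
  then show ?case
  proof cases
    case 1
    then obtain w' where "(w, w') \<in> relH" "w' \<in> words XH" "length w' < length w"
      using hreduce_step w by blast
    then show ?thesis using IH[of w'] by (auto intro: pres_rel.trans)
  next
    case 2
    then obtain w' where "(w, w') \<in> relH" "w' \<in> words XH" "length w' = length w"
      "x_inversions w' < x_inversions w"
      using x_gather_step w by blast
    then show ?thesis using IH[of w'] by (auto intro: pres_rel.trans)
  next
    case 3
    then show ?thesis using w by (blast intro: pres_rel.refl)
  qed
qed

section \<open>Specialisations to G\<close>

definition spec_letter :: "nat \<Rightarrow> ('v + nat) \<times> bool \<Rightarrow> 'v word" where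
  "spec_letter N l = (case fst l of Inl v \<Rightarrow> [(v, snd l)] | Inr i \<Rightarrow> replicate (N ^ Suc i) (x, snd l))"

abbreviation spec :: "nat \<Rightarrow> ('v + nat) word \<Rightarrow> 'v word" where
  "spec N \<equiv> word_subst (spec_letter N)"

lemma spec_letter_Inl [simp]: "spec_letter N (Inl v, b) = [(v, b)]"
  and spec_letter_Inr [simp]: "spec_letter N (Inr i, b) = replicate (N ^ Suc i) (x, b)"
  by (simp_all add: spec_letter_def)

lemma spec_letter_inv: "spec_letter N (letter_inv l) = word_inv (spec_letter N l)"
  by (cases l; cases "fst l") (auto simp: letter_inv_def word_inv_replicate word_inv_def)

lemma spec_word_inv: "spec N (word_inv w) = word_inv (spec N w)"
  by (induction w) (auto simp: spec_letter_inv)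

lemma spec_letter_words: "fst l \<in> XH \<Longrightarrow> spec_letter N l \<in> words V"
  using x_in_V by (cases l; cases "fst l") (auto simp: ext_gens_def words_def)

lemma spec_lift_word [simp]: "spec N (lift_word c) = c"
  by (induction c) (auto simp: lift_word_def)

lemma x_power_commute:
  assumes "(c @ [(x, False)], [(x, False)] @ c) \<in> relG"
  shows "(c @ replicate k (x, False), replicate k (x, False) @ c) \<in> relG"
proof (induction k)
  case 0
  then show ?case using pres_rel_words[OF assms] by (simp add: pres_rel.refl)
next
  case (Suc k)
  have "c \<in> words V" using pres_rel_words[OF assms] by simp
  then have "(c @ replicate k (x, False) @ [(x, False)], replicate k (x, False) @ c @ [(x, False)]) \<in> relG"
    and "(replicate k (x, False) @ c @ [(x, False)], replicate k (x, False) @ [(x, False)] @ c) \<in> relG"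
    using pres_rel_append_context[OF Suc, of "[]" "[(x, False)]"]
      pres_rel_append_context[OF assms, of "replicate k (x, False)" "[]"] x_in_V
    by (simp_all add: words_def)
  moreover have "replicate (Suc k) (x, False) = replicate k (x, False) @ [(x, False)]"
    by (simp add: replicate_append_same)
  ultimately show ?case by (simp add: pres_rel.trans)
qed

lemma commutes_with_x_if_centralizer:
  assumes "c \<in> words V" "relG `` {c} \<in> centralizer (pc_group V E) (relG `` {[(x, False)]})"
  shows "(c @ [(x, False)], [(x, False)] @ c) \<in> relG"
proof -
  have x_word: "[(x, False)] \<in> words V" using x_in_V by simp
  then have "relG `` {c @ [(x, False)]} = relG `` {[(x, False)] @ c}"
    using assms presented_group_mult_class[OF assms(1) x_word, of RG]
      presented_group_mult_class[OF x_word assms(1), of RG]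
    by (simp add: centralizer_def pc_group_def)
  then show ?thesis
    using eq_equiv_class_iff[OF equiv_pres_rel] assms(1) x_word by (metis words_append)
qed

lemma spec_commutator: "spec N (commutator_word u w) = commutator_word (spec N u) (spec N w)"
  by (simp add: commutator_word_def spec_word_inv)

lemma spec_relator:
  assumes "r \<in> RH"
  shows "(spec N r, []) \<in> relG"
proof -
  have A_word: "replicate k (x, b) \<in> words V" for k b using x_in_V by (simp add: words_def)
  from assms consider (G) r0 where "r = lift_word r0" "r0 \<in> RG"
    | (A) i j where "r = commutator_word [(Inr i, False)] [(Inr j, False)]"
    | (C) i c where "r = commutator_word [(Inr i, False)] (lift_word c)" "c \<in> words V"
        "relG `` {c} \<in> centralizer (pc_group V E) (relG `` {[(x, False)]})"
    unfolding ext_relators_def by blast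
  then show ?thesis
  proof cases
    case G
    then have "r0 \<in> words V"
      by (auto simp: pc_relators_def commutator_word_def word_inv_def dest: edge_in_V)
    then show ?thesis using G pres_rel.relator[of "[]" V "[]" r0 RG] by simp
  next
    case A
    let ?a = "replicate (N ^ Suc i) (x, False)" and ?b = "replicate (N ^ Suc j) (x, False)"
    have "?a @ ?b = ?b @ ?a" by (simp add: replicate_add[symmetric] add.commute)
    then have "(?a @ ?b, ?b @ ?a) \<in> relG" using A_word by (metis pres_rel.refl words_append)
    then have "(commutator_word ?a ?b, []) \<in> relG"
      using A_word by (intro commutator_trivial_if_commute)
    then show ?thesis using A by (simp add: spec_commutator)
  next
    case C
    have "(replicate (N ^ Suc i) (x, False) @ c, c @ replicate (N ^ Suc i) (x, False)) \<in> relG"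
      by (rule pres_rel.sym[OF x_power_commute[OF commutes_with_x_if_centralizer[OF C(2,3)]]])
    then show ?thesis
      using C commutator_trivial_if_commute[of _ c V RG] A_word by (simp add: spec_commutator)
  qed
qed

lemma spec_morphism: "presentation_morphism XH RH V RG (spec_letter N)"
  by unfold_locales (auto simp: spec_letter_words spec_letter_inv spec_relator)

lemma spec_hom: "subst_hom V RG (spec_letter N) \<in> hom (ext_group V E x m) (pc_group V E)"
  using presentation_morphism.subst_hom_hom[OF spec_morphism]
  by (simp add: ext_group_def pc_group_def)

definition x_degree :: "('v + nat) \<times> bool \<Rightarrow> nat" where
  "x_degree l = (case fst l of Inl _ \<Rightarrow> 0 | Inr i \<Rightarrow> Suc i)"

definition block_poly :: "('v + nat) word \<Rightarrow> int poly" where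
  "block_poly R = (\<Sum>l\<leftarrow>R. monom (sgnb (snd l)) (x_degree l))"

lemma block_poly_Cons [simp]: "block_poly (l # R) = monom (sgnb (snd l)) (x_degree l) + block_poly R"
  by (simp add: block_poly_def)

lemma poly_block_poly: "\<forall>l\<in>set R. at_x l \<Longrightarrow> poly (block_poly R) (int N) = exp_sum (spec N R)"
proof (induction R)
  case (Cons l R)
  then have "fst l = Inl x \<or> (\<exists>i. fst l = Inr i)" by (simp add: at_x_cases)
  then have "poly (monom (sgnb (snd l)) (x_degree l)) (int N) = exp_sum (spec_letter N l)"
    by (cases l) (auto simp: x_degree_def poly_monom exp_sum_replicate)
  then show ?case using Cons by simp
qed (simp add: block_poly_def)

lemma x_degree_eq_iff: "at_x l \<Longrightarrow> at_x l' \<Longrightarrow> x_degree l = x_degree l' \<longleftrightarrow> fst l = fst l'"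
  using at_x_cases[of l] at_x_cases[of l'] by (auto simp: x_degree_def)

lemma coeff_block_poly:
  assumes "\<forall>l\<in>set R. at_x l \<and> (fst l = g \<longrightarrow> snd l = c)" "at_x (g, c)"
  shows "coeff (block_poly R) (x_degree (g, c)) = sgnb c * int (length (filter (\<lambda>l. fst l = g) R))"
  using assms
proof (induction R)
  case (Cons l R)
  then have "coeff (monom (sgnb (snd l)) (x_degree l)) (x_degree (g, c)) = (if fst l = g then sgnb c else 0)"
    using x_degree_eq_iff[of l "(g, c)"] by (auto simp: coeff_monom)
  then show ?case using Cons by (simp add: algebra_simps)
qed (simp add: block_poly_def)

text \<open>In a block of letters at x that starts an H-reduced word, no generator occurs with
  both signs, so the coefficient of the first letter's degree counts its occurrences.\<close>

lemma x_block_poly_nonzero: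
  assumes "hreduced (R @ w)" "R \<noteq> []" "\<forall>l\<in>set R. at_x l"
  shows "block_poly R \<noteq> 0"
proof -
  obtain l R' where R: "R = l # R'" using assms(2) by (cases R) auto
  have same_sign: "snd l' = snd l" if l': "l' \<in> set R'" "fst l' = fst l" for l'
  proof (rule ccontr)
    assume "snd l' \<noteq> snd l"
    then have "l' = letter_inv l" using l' by (cases l; cases l') (auto simp: letter_inv_def)
    moreover obtain p s where "R' = p @ l' # s" using split_list[OF l'(1)] by blast
    moreover from this have "\<forall>z\<in>set p. hcommute l z"
      using assms(3) R calculation by (auto simp: hcommute_def)
    ultimately have "hvisible l (R' @ w)" unfolding hvisible_def by force
    then show False using assms(1) R by simp
  qed
  have "coeff (block_poly R) (x_degree (fst l, snd l)) =
      sgnb (snd l) * int (length (filter (\<lambda>l'. fst l' = fst l) R))"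
    using coeff_block_poly[of R "fst l" "snd l"] assms(3) R same_sign by auto
  moreover have "sgnb (snd l) \<noteq> 0" by (simp add: sgnb_def)
  ultimately have "coeff (block_poly R) (x_degree l) \<noteq> 0" using R by simp
  then show ?thesis by (metis coeff_0)
qed

lemma finite_nat_roots: "(p :: int poly) \<noteq> 0 \<Longrightarrow> finite {N :: nat. poly p (int N) = 0}"
  using finite_vimageI[OF poly_roots_finite[of p], of int] by (simp add: vimage_def inj_on_def)

text \<open>The two tracking conditions say
  that a letter visible at the front of u comes from a letter visible, in the sense of H,
  at the front of w; so a letter prepended to a normal form w never cancels in u.\<close>

definition tracks_visible :: "'v word \<Rightarrow> ('v + nat) word \<Rightarrow> bool" where
  "tracks_visible u w \<longleftrightarrow> (\<forall>v e. v \<noteq> x \<longrightarrow> visible v e u \<longrightarrow>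
     (\<exists>p r. w = p @ (Inl v, e) # r \<and> (\<forall>z\<in>set p. (v, base (fst z)) \<in> E)))"

definition tracks_x :: "'v word \<Rightarrow> ('v + nat) word \<Rightarrow> bool" where
  "tracks_x u w \<longleftrightarrow> (\<forall>e. visible x e u \<longrightarrow>
     (\<exists>p l r. w = p @ l # r \<and> at_x l \<and> (\<forall>z\<in>set p. \<not> at_x z \<and> (x, base (fst z)) \<in> E)))"

definition reduced_image :: "nat \<Rightarrow> ('v + nat) word \<Rightarrow> 'v word \<Rightarrow> bool" where
  "reduced_image N w u \<longleftrightarrow> word_act (spec N w) (proj []) = proj u \<and> reduced u \<and> (u = [] \<longleftrightarrow> w = []) \<and>
     tracks_visible u w \<and> tracks_x u w"

lemma reduced_image_Nil: "reduced_image N [] []"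
  by (simp add: reduced_image_def tracks_visible_def tracks_x_def visible_def)

lemma tracks_visible_Cons:
  assumes "tracks_visible u w"
  shows "tracks_visible ((v, b) # u) ((Inl v, b) # w)"
  unfolding tracks_visible_def
proof (intro allI impI)
  fix v' e assume "v' \<noteq> x" "visible v' e ((v, b) # u)"
  then consider "(v', e) = (v, b)" | "(v', v) \<in> E" "visible v' e u" by (auto simp: visible_Cons)
  then show "\<exists>p r. (Inl v, b) # w = p @ (Inl v', e) # r \<and> (\<forall>z\<in>set p. (v', base (fst z)) \<in> E)"
  proof cases
    case 1
    then show ?thesis by (intro exI[of _ "[]"] exI[of _ w]) auto
  next
    case 2
    then obtain p r where "w = p @ (Inl v', e) # r" "\<forall>z\<in>set p. (v', base (fst z)) \<in> E"
      using assms \<open>v' \<noteq> x\<close> unfolding tracks_visible_def by blast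
    then show ?thesis using 2 by (intro exI[of _ "(Inl v, b) # p"] exI[of _ r]) auto
  qed
qed

lemma tracks_x_Cons:
  assumes "tracks_x u w" "v \<noteq> x"
  shows "tracks_x ((v, b) # u) ((Inl v, b) # w)"
  unfolding tracks_x_def
proof (intro allI impI)
  fix e assume "visible x e ((v, b) # u)"
  then have "(x, v) \<in> E" "visible x e u" using visible_Cons assms(2) by auto
  then obtain p l r where "w = p @ l # r" "at_x l" "\<forall>z\<in>set p. \<not> at_x z \<and> (x, base (fst z)) \<in> E"
    using assms(1) unfolding tracks_x_def by blast
  then show "\<exists>p l r. (Inl v, b) # w = p @ l # r \<and> at_x l \<and> (\<forall>z\<in>set p. \<not> at_x z \<and> (x, base (fst z)) \<in> E)"
    using \<open>(x, v) \<in> E\<close> assms(2) by (intro exI[of _ "(Inl v, b) # p"]) (auto simp: at_x_def)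
qed

lemma reduced_image_Cons:
  assumes img: "reduced_image N w u" and "v \<noteq> x" and hred: "hreduced ((Inl v, b) # w)"
  shows "reduced_image N ((Inl v, b) # w) ((v, b) # u)"
proof -
  have not_vis: "\<not> visible v (\<not> b) u"
  proof
    assume "visible v (\<not> b) u"
    then obtain p r where "w = p @ (Inl v, \<not> b) # r" "\<forall>z\<in>set p. (v, base (fst z)) \<in> E"
      using img \<open>v \<noteq> x\<close> unfolding reduced_image_def tracks_visible_def by blast
    then have "hvisible (Inl v, b) w" unfolding hvisible_def hcommute_def letter_inv_def by auto
    then show False using hred by simp
  qed
  then show ?thesis
    using img letter_act_push[OF not_vis] tracks_visible_Cons tracks_x_Cons[OF _ \<open>v \<noteq> x\<close>]
    by (simp add: reduced_image_def word_act_append)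
qed

lemma spec_at_x: "\<forall>l\<in>set R. at_x l \<Longrightarrow> \<forall>y\<in>set (spec N R). fst y = x"
  using at_x_cases by (fastforce simp: word_subst_def spec_letter_def)

lemma reduced_image_no_x_visible:
  assumes "reduced_image N w' u" "w' = [] \<or> \<not> at_x (hd w')"
    and "x_gathered (R @ w')" "R \<noteq> []" "\<forall>l\<in>set R. at_x l"
  shows "\<not> visible x e u"
proof
  assume "visible x e u"
  then obtain p l r where w': "w' = p @ l # r" "at_x l" "\<forall>z\<in>set p. \<not> at_x z \<and> (x, base (fst z)) \<in> E"
    using assms(1) unfolding reduced_image_def tracks_x_def by blast
  moreover have "p \<noteq> []" using assms(2) w' by auto
  ultimately have "x_gap w'" unfolding x_gap_def by blast
  moreover have "x_gathered (butlast R @ last R # w')"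
    using assms(3,4) by (metis append.assoc append_Cons append_Nil append_butlast_last_id)
  ultimately show False using x_gathered_no_gap assms(4,5) by simp
qed

lemma reduced_image_x_block:
  assumes w: "w = R @ w'" and R: "R \<noteq> []" "\<forall>l\<in>set R. at_x l"
    and maximal: "w' = [] \<or> \<not> at_x (hd w')" and gathered: "x_gathered w"
    and img: "reduced_image N w' u'" and nonzero: "poly (block_poly R) (int N) \<noteq> 0"
  shows "reduced_image N w (vpow x (exp_sum (spec N R)) @ u')"
proof -
  let ?n = "exp_sum (spec N R)"
  have not_vis: "\<not> visible x e u'" for e
    using reduced_image_no_x_visible[OF img maximal _ R] gathered w by simp
  have block: "word_act (spec N R) (proj u') = proj (vpow x ?n @ u')" "reduced (vpow x ?n @ u')"
    using word_act_vertex_block[OF _ _ spec_at_x[OF R(2)]] img not_vis by (auto simp: reduced_image_def)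
  have "?n \<noteq> 0" using nonzero poly_block_poly[OF R(2)] by simp
  then obtain c rest where vpow_Cons: "vpow x ?n = (x, c) # rest" using vpow_nonzero by blast
  have vpow_at_x: "\<forall>y\<in>set (vpow x ?n). fst y = x" by (simp add: vpow_def)
  have "tracks_visible (vpow x ?n @ u') w"
    unfolding tracks_visible_def
  proof (intro allI impI)
    fix v e assume "v \<noteq> x" "visible v e (vpow x ?n @ u')"
    then have "(v, x) \<in> E" "visible v e u'"
      using visible_append_block[OF _ vpow_at_x] vpow_Cons by auto
    then obtain p r where "w' = p @ (Inl v, e) # r" "\<forall>z\<in>set p. (v, base (fst z)) \<in> E"
      using img \<open>v \<noteq> x\<close> unfolding reduced_image_def tracks_visible_def by blast
    then show "\<exists>p r. w = p @ (Inl v, e) # r \<and> (\<forall>z\<in>set p. (v, base (fst z)) \<in> E)"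
      using w R \<open>(v, x) \<in> E\<close> by (intro exI[of _ "R @ p"] exI[of _ r]) (auto simp: at_x_def)
  qed
  moreover have "tracks_x (vpow x ?n @ u') w"
    unfolding tracks_x_def using w R by (cases R) (auto intro!: exI[of _ "[]"])
  ultimately show ?thesis
    using img block vpow_Cons w R by (simp add: reduced_image_def word_act_append)
qed

lemma reduced_image_exists:
  "w \<in> words XH \<Longrightarrow> hreduced w \<Longrightarrow> x_gathered w \<Longrightarrow> finite {N. \<nexists>u. reduced_image N w u}"
proof (induction "length w" arbitrary: w rule: less_induct)
  case less
  show ?case
  proof (cases w)
    case Nil
    then have "{N. \<nexists>u. reduced_image N w u} = {}" using reduced_image_Nil by blast
    then show ?thesis by simp
  next
    case (Cons l w0)
    show ?thesis
    proof (cases "at_x l")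
      case False
      then obtain v b where l: "l = (Inl v, b)" "v \<noteq> x" by (cases l; cases "fst l") (auto simp: at_x_def)
      have "finite {N. \<nexists>u. reduced_image N w0 u}" using less Cons by auto
      moreover have "{N. \<nexists>u. reduced_image N w u} \<subseteq> {N. \<nexists>u. reduced_image N w0 u}"
      proof (intro subsetI CollectI notI)
        fix N assume "N \<in> {N. \<nexists>u. reduced_image N w u}" "\<exists>u. reduced_image N w0 u"
        then show False using reduced_image_Cons[OF _ l(2), of N w0 _ b] l less.prems(2) Cons by auto
      qed
      ultimately show ?thesis by (rule finite_subset[rotated])
    next
      case True
      define R where "R = takeWhile at_x w"
      define w' where "w' = dropWhile at_x w"
      have w: "w = R @ w'" by (simp add: R_def w'_def)
      have R: "R \<noteq> []" "\<forall>l\<in>set R. at_x l"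
        using True Cons by (auto simp: R_def dest: set_takeWhileD)
      have maximal: "w' = [] \<or> \<not> at_x (hd w')"
        unfolding w'_def using hd_dropWhile by blast
      have "length w' < length w" "w' \<in> words XH" "hreduced w'" "x_gathered w'"
        using less.prems w R(1) hreduced_appendD[of R w'] x_gathered_appendD[of R w'] by auto
      then have "finite {N. \<nexists>u. reduced_image N w' u}" by (rule less.hyps)
      moreover have "finite {N. poly (block_poly R) (int N) = 0}"
        using x_block_poly_nonzero[of R w'] less.prems(2) w R by (intro finite_nat_roots) simp
      moreover have "{N. \<nexists>u. reduced_image N w u} \<subseteq>
          {N. \<nexists>u. reduced_image N w' u} \<union> {N. poly (block_poly R) (int N) = 0}"
        using reduced_image_x_block[OF w R maximal less.prems(3)] by blast
      ultimately show ?thesis by (simp add: finite_subset)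
    qed
  qed
qed

lemma spec_nontrivial:
  assumes "w \<in> words XH" "(w, []) \<notin> relH"
  shows "finite {N. (spec N w, []) \<in> relG}"
proof -
  obtain w' where w': "(w, w') \<in> relH" "w' \<in> words XH" "hreduced w'" "x_gathered w'"
    using exists_normal_rep assms(1) by blast
  have "w' \<noteq> []" using w' assms(2) by auto
  have "{N. (spec N w, []) \<in> relG} \<subseteq> {N. \<nexists>u. reduced_image N w' u}"
  proof (intro subsetI CollectI notI)
    fix N assume "N \<in> {N. (spec N w, []) \<in> relG}" and "\<exists>u. reduced_image N w' u"
    then obtain u where "reduced_image N w' u" "(spec N w', []) \<in> relG"
      using presentation_morphism.word_subst_pres_rel[OF spec_morphism w'(1)]
      by (blast intro: pres_rel.trans pres_rel.sym)
    then show False using word_act_nontrivial \<open>w' \<noteq> []\<close> by (auto simp: reduced_image_def)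
  qed
  then show ?thesis using reduced_image_exists w' finite_subset by blast
qed

lemma spec_separates:
  assumes "A \<in> carrier (ext_group V E x m)" "B \<in> carrier (ext_group V E x m)" "A \<noteq> B"
  shows "finite {N. subst_hom V RG (spec_letter N) A = subst_hom V RG (spec_letter N) B}"
proof -
  obtain a b where ab: "a \<in> words XH" "A = relH `` {a}" "b \<in> words XH" "B = relH `` {b}"
    using assms presented_group_carrier_rep unfolding ext_group_def by metis
  then have "(a @ word_inv b, []) \<notin> relH"
    using assms(3) pres_rel_iff_quotient_trivial equiv_class_eq[OF equiv_pres_rel] by blast
  moreover have "subst_hom V RG (spec_letter N) A = subst_hom V RG (spec_letter N) B \<longleftrightarrow>
      (spec N (a @ word_inv b), []) \<in> relG" for N
  proof -
    have ws: "spec N a \<in> words V" "spec N b \<in> words V"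
      using presentation_morphism.word_subst_words[OF spec_morphism] ab by auto
    have "subst_hom V RG (spec_letter N) A = subst_hom V RG (spec_letter N) B \<longleftrightarrow>
        relG `` {spec N a} = relG `` {spec N b}"
      using presentation_morphism.subst_hom_class[OF spec_morphism] ab by simp
    also have "\<dots> \<longleftrightarrow> (spec N a, spec N b) \<in> relG"
      using eq_equiv_class_iff[OF equiv_pres_rel ws] .
    also have "\<dots> \<longleftrightarrow> (spec N a @ word_inv (spec N b), []) \<in> relG"
      using pres_rel_iff_quotient_trivial[OF ws] .
    finally show ?thesis by (simp add: spec_word_inv)
  qed
  moreover have "a @ word_inv b \<in> words XH" using ab by simp
  ultimately show ?thesis using spec_nontrivial by presburger
qed

end

theorem lemma4p1:
  fixes V :: "'v set" and E :: "('v \<times> 'v) set" and x :: 'v and n :: nat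
  assumes "simplicial_graph V E"
    and "x \<in> V"
    and "n \<ge> 2"
  shows "discriminated_by (ext_group V E x (n - 1)) (pc_group V E)"
proof -
  \<comment> \<open>The argument works for every rank of A.\<close>
  interpret ext_setup V E x "n - 1"
    using assms by unfold_locales
  show ?thesis
    using spec_hom spec_separates by (rule discriminated_by_separating_family)
qed

end
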